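(* Let $A$ be a finite alphabet and let $w=\mu^{\omega}(a)$, where $a\in A$ and $\mu$ is an $r$-uniform morphism with $r\ge 2$ that is prolongable on $a$. Suppose $w$ is aperiodic and uniformly recurrent. Then there is a constant $c$, depending only on $w$, such that for every positive integer $k$ and every index $i\ge 0$ of $w$, there is a $k$-antipower with block length at most $ck$ starting at position $i$ of $w$.
   Context: Words are indexed from $0$; infinite words are infinite to the right. A $k$-antipower is a word that is the concatenation of $k$ pairwise distinct words (blocks) of equal length; that common length is the block length. A morphism $\mu$ of $A^{\infty}=A^*\cup A^{\omega}$ satisfies $\mu(uv)=\mu(u)\mu(v)$ for finite $u$; it is $r$-uniform if $|\mu(b)|=r$ for all $b\in A$; it is prolongable on $a$ if $\mu(a)$ begins with $a$, in which case $\mu^{\omega}(a)$ is the infinite word having every $\mu^n(a)$ as a prefix. An infinite word is aperiodic if it has no periodic suffix. An infinite word $w$ is uniformly recurrent if for every integer $a$ there is an integer $b$ such that every length-$a$ substring (factor of consecutive letters) of $w$ occurs in every length-$b$ substring of $w$. *)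

theory Defs
  imports Main
begin

definition morph_apply :: "('a \<Rightarrow> 'a list) \<Rightarrow> 'a list \<Rightarrow> 'a list" where
  "morph_apply \<mu> xs = concat (map \<mu> xs)"

definition uniform_morphism :: "nat \<Rightarrow> ('a \<Rightarrow> 'a list) \<Rightarrow> bool" where
  "uniform_morphism r \<mu> \<longleftrightarrow> (\<forall>b. length (\<mu> b) = r)"

definition prolongable_on :: "('a \<Rightarrow> 'a list) \<Rightarrow> 'a \<Rightarrow> bool" where
  "prolongable_on \<mu> a \<longleftrightarrow> \<mu> a \<noteq> [] \<and> hd (\<mu> a) = a"

text \<open>w is mu^omega(a): every mu^n(a) is a prefix of w.\<close>
definition is_fixed_point_word :: "('a \<Rightarrow> 'a list) \<Rightarrow> 'a \<Rightarrow> (nat \<Rightarrow> 'a) \<Rightarrow> bool" where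
  "is_fixed_point_word \<mu> a w \<longleftrightarrow>
     (\<forall>n i. i < length ((morph_apply \<mu> ^^ n) [a]) \<longrightarrow> w i = ((morph_apply \<mu> ^^ n) [a]) ! i)"

definition aperiodic :: "(nat \<Rightarrow> 'a) \<Rightarrow> bool" where
  "aperiodic w \<longleftrightarrow> \<not> (\<exists>p>0. \<exists>N. \<forall>i\<ge>N. w (i + p) = w i)"

definition uniformly_recurrent :: "(nat \<Rightarrow> 'a) \<Rightarrow> bool" where
  "uniformly_recurrent w \<longleftrightarrow>
     (\<forall>m. \<exists>b. \<forall>i j. \<exists>t. t + m \<le> b \<and> (\<forall>s<m. w (i + s) = w (j + t + s)))"

definition antipower_at :: "(nat \<Rightarrow> 'a) \<Rightarrow> nat \<Rightarrow> nat \<Rightarrow> nat \<Rightarrow> bool" where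
  "antipower_at w i k l \<longleftrightarrow>
     (\<forall>p<k. \<forall>q<k. p \<noteq> q \<longrightarrow>
        map (\<lambda>s. w (i + p * l + s)) [0..<l] \<noteq> map (\<lambda>s. w (i + q * l + s)) [0..<l])"

end

theory Submission
  imports Defs "HOL-Number_Theory.Cong"
begin

text \<open>
  The heart of the proof is recognizability: there is an \<open>L\<close> such that two occurrences of
  the same factor of length \<open>L r^m\<close> start at positions congruent modulo \<open>r^m\<close>.
  Taking \<open>k \<le> r^m \<le> r k\<close> and blocks of length \<open>l = L r^m + 1\<close>, two equal blocks
  \<open>p \<noteq> q\<close> would give \<open>p l \<equiv> q l\<close>, i.e. \<open>p \<equiv> q (mod r^m)\<close>, impossible for \<open>p, q < k\<close>.

  The word of length-\<open>r^m\<close> blocks of \<open>w\<close>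
  is again self-similar, aperiodic and has at most \<open>|A|\<close> letters. If none of its factors
  of length \<open>r l + 1\<close> is synchronizing (all occurrences in one residue class mod \<open>r\<close>), each
  of them arises from at least two pairs (factor of length \<open>l + 1\<close>, residue), so the number
  of factors grows at most by \<open>r/2\<close> per \<open>r\<close>-fold lengthening; against the Morse-Hedlund
  bound this yields a synchronizing factor of length \<open>r^(2|A|) + 1\<close>. Uniform recurrence
  places an occurrence of it within bounded distance of any position, which upgrades a
  congruence modulo \<open>r^m\<close> to one modulo \<open>r^(m+1)\<close>.
\<close>

definition factor_at :: "(nat \<Rightarrow> 'b) \<Rightarrow> nat \<Rightarrow> nat \<Rightarrow> 'b list" where
  "factor_at u n x = map (\<lambda>s. u (x + s)) [0..<n]"

definition factors :: "(nat \<Rightarrow> 'b) \<Rightarrow> nat \<Rightarrow> 'b list set" where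
  "factors u n = range (factor_at u n)"

lemma factor_at_eq_iff: "factor_at u n x = factor_at u n y \<longleftrightarrow> (\<forall>s<n. u (x + s) = u (y + s))"
  by (auto simp: factor_at_def)

lemma factor_at_eq_subfactor:
  assumes "factor_at u n x = factor_at u n y" and "d + m \<le> n"
  shows "factor_at u m (x + d) = factor_at u m (y + d)"
  unfolding factor_at_eq_iff
proof (intro allI impI)
  fix s assume "s < m"
  with assms have "u (x + (d + s)) = u (y + (d + s))"
    unfolding factor_at_eq_iff by simp
  then show "u (x + d + s) = u (y + d + s)"
    by (simp add: add.assoc)
qed

lemma factor_at_eq_transfer:
  assumes "\<And>k k'. u k = u k' \<Longrightarrow> v k = v k'" and "factor_at u n x = factor_at u n y"
  shows "factor_at v n x = factor_at v n y"
  using assms(2) unfolding factor_at_eq_iff by (blast intro: assms(1))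

lemma take_factor_at: "m \<le> n \<Longrightarrow> take m (factor_at u n x) = factor_at u m x"
  by (simp add: factor_at_def take_map)

lemma factors_subset_lists: "factors u n \<subseteq> {xs. set xs \<subseteq> range u \<and> length xs = n}"
  by (auto simp: factors_def factor_at_def)

lemma finite_factors: "finite (range u) \<Longrightarrow> finite (factors u n)"
  by (rule finite_subset[OF factors_subset_lists finite_lists_length_eq])

lemma card_factors_le:
  assumes "finite (range u)"
  shows "card (factors u n) \<le> card (range u) ^ n"
proof -
  have "card (factors u n) \<le> card {xs. set xs \<subseteq> range u \<and> length xs = n}"
    by (rule card_mono[OF finite_lists_length_eq[OF assms] factors_subset_lists])
  then show ?thesis
    by (simp add: card_lists_length_eq[OF assms])
qed

lemma factors_eq_image_take: "m \<le> n \<Longrightarrow> factors u m = take m ` factors u n"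
  unfolding factors_def by (simp add: image_image take_factor_at)

lemma eventually_periodic_if_factor_determines_next:
  assumes next_letter: "\<And>x y. factor_at u n x = factor_at u n y \<Longrightarrow> u (x + n) = u (y + n)"
    and "factor_at u n x = factor_at u n y"
  shows "\<forall>i\<ge>x + n. u (i + (y - x)) = u i"
proof -
  have shifted: "factor_at u n (x + t) = factor_at u n (y + t)" for t
  proof (induction t)
    case 0
    then show ?case using assms(2) by simp
  next
    case (Suc t)
    show ?case
      unfolding factor_at_eq_iff
    proof (intro allI impI)
      fix s assume "s < n"
      show "u (x + Suc t + s) = u (y + Suc t + s)"
      proof (cases "Suc s < n")
        case True
        then have "u (x + t + Suc s) = u (y + t + Suc s)"
          using Suc unfolding factor_at_eq_iff by blast
        then show ?thesis by simp
      next
        case False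
        with \<open>s < n\<close> have "x + Suc t + s = x + t + n" and "y + Suc t + s = y + t + n"
          by simp_all
        then show ?thesis
          using next_letter[OF Suc] by (simp only:)
      qed
    qed
  qed
  show ?thesis
  proof (intro allI impI)
    fix i assume "x + n \<le> i"
    then obtain t where "i = x + t + n" by (metis add.commute add.left_commute le_iff_add)
    then show "u (i + (y - x)) = u i"
      using next_letter[OF shifted[of t]] by (cases "x \<le> y") (simp_all add: algebra_simps)
  qed
qed

lemma card_factors_less_Suc:
  assumes "aperiodic u" and fin: "finite (range u)"
  shows "card (factors u n) < card (factors u (Suc n))"
proof -
  have factors_n: "factors u n = take n ` factors u (Suc n)"
    by (simp add: factors_eq_image_take)
  show ?thesis
  proof (rule ccontr)
    assume "\<not> ?thesis"
    moreover have "card (take n ` factors u (Suc n)) \<le> card (factors u (Suc n))"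
      by (rule card_image_le[OF finite_factors[OF fin]])
    ultimately have "card (take n ` factors u (Suc n)) = card (factors u (Suc n))"
      using factors_n by simp
    then have inj: "inj_on (take n) (factors u (Suc n))"
      by (rule eq_card_imp_inj_on[OF finite_factors[OF fin]])
    have next_letter: "u (x + n) = u (y + n)" if "factor_at u n x = factor_at u n y" for x y
    proof -
      have "take n (factor_at u (Suc n) x) = take n (factor_at u (Suc n) y)"
        using that by (simp add: take_factor_at)
      then have "factor_at u (Suc n) x = factor_at u (Suc n) y"
        by (rule inj_onD[OF inj]) (simp_all add: factors_def)
      then show ?thesis by (simp add: factor_at_eq_iff)
    qed
    have "\<not> inj (factor_at u n)"
      using finite_factors[OF fin, of n] finite_imageD unfolding factors_def by blast
    then obtain x y where "x < y" and eq: "factor_at u n x = factor_at u n y"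
      unfolding inj_def by (metis linorder_neq_iff)
    then show False
      using eventually_periodic_if_factor_determines_next[OF next_letter eq] \<open>aperiodic u\<close>
      unfolding aperiodic_def by (metis zero_less_diff)
  qed
qed

lemma card_factors_ge_if_aperiodic:
  assumes "aperiodic u" and "finite (range u)"
  shows "n + 1 \<le> card (factors u n)"
proof (induction n)
  case 0
  then show ?case by (simp add: factors_def factor_at_def)
next
  case (Suc n)
  then show ?case using card_factors_less_Suc[OF assms, of n] by simp
qed

lemma mult_card_le_card_if_fibres:
  assumes "finite D" and fibres: "\<And>b. b \<in> B \<Longrightarrow> n \<le> card {d \<in> D. f d = b}"
  shows "n * card B \<le> card D"
proof (cases "finite B")
  case True
  have "n * card B = (\<Sum>b\<in>B. n)" by simp
  also have "\<dots> \<le> (\<Sum>b\<in>B. card {d \<in> D. f d = b})" by (rule sum_mono) (rule fibres)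
  also have "\<dots> = card (\<Union>b\<in>B. {d \<in> D. f d = b})"
    by (rule card_UN_disjoint[symmetric]) (use True \<open>finite D\<close> in auto)
  also have "\<dots> \<le> card D" by (rule card_mono[OF \<open>finite D\<close>]) auto
  finally show ?thesis .
qed simp

text \<open>The property of a fixed point of an \<open>r\<close>-uniform morphism, stated without the morphism
  so that it passes to the block words \<open>blocks u (r ^ m)\<close> below.\<close>
definition self_similar :: "nat \<Rightarrow> (nat \<Rightarrow> 'b) \<Rightarrow> bool" where
  "self_similar r u \<longleftrightarrow> (\<forall>n n' j. j < r \<longrightarrow> u n = u n' \<longrightarrow> u (r * n + j) = u (r * n' + j))"

definition synchronizing :: "nat \<Rightarrow> (nat \<Rightarrow> 'b) \<Rightarrow> nat \<Rightarrow> nat \<Rightarrow> bool" where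
  "synchronizing r u n x \<longleftrightarrow> (\<forall>y. factor_at u n y = factor_at u n x \<longrightarrow> [y = x] (mod r))"

lemma self_similarD:
  "self_similar r u \<Longrightarrow> j < r \<Longrightarrow> u n = u n' \<Longrightarrow> u (r * n + j) = u (r * n' + j)"
  unfolding self_similar_def by blast

lemma self_similar_factor_lift:
  assumes "self_similar r u" and "factor_at u l y = factor_at u l y'"
  shows "factor_at u (r * l) (r * y) = factor_at u (r * l) (r * y')"
  unfolding factor_at_eq_iff
proof (intro allI impI)
  fix s assume "s < r * l"
  then have "r > 0"
    by (cases r) simp_all
  with \<open>s < r * l\<close> have "s div r < l"
    by (simp add: div_less_iff_less_mult mult.commute)
  have "s mod r < r"
    using \<open>r > 0\<close> by simp
  moreover have "u (y + s div r) = u (y' + s div r)"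
    using assms(2) \<open>s div r < l\<close> by (simp add: factor_at_eq_iff)
  ultimately have "u (r * (y + s div r) + s mod r) = u (r * (y' + s div r) + s mod r)"
    by (rule self_similarD[OF assms(1)])
  moreover have "r * z + s = r * (z + s div r) + s mod r" for z
    by (simp add: distrib_left add.assoc)
  ultimately show "u (r * y + s) = u (r * y' + s)" by metis
qed

lemma synchronizing_mono:
  assumes "synchronizing r u n x" and "n \<le> n'"
  shows "synchronizing r u n' x"
  using assms take_factor_at[of n n' u] unfolding synchronizing_def by metis

lemma double_card_factors_le_if_not_synchronizing:
  assumes ss: "self_similar r u" and fin: "finite (range u)" and "r > 0"
    and not_sync: "\<And>x. \<not> synchronizing r u (r * l + 1) x"
  shows "2 * card (factors u (r * l + 1)) \<le> r * card (factors u (Suc l))"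
proof -
  define D where "D = factors u (Suc l) \<times> {..<r}"
  have "finite D"
    unfolding D_def using finite_factors[OF fin] by simp
  define pos where "pos x = (factor_at u (Suc l) (x div r), x mod r)" for x
  txt \<open>By self-similarity the factor of length \<open>r l + 1\<close> at \<open>x\<close> depends only on \<open>pos x\<close>,
    and a non-synchronizing factor has two such preimages differing in the residue.\<close>
  define f where
    "f = (\<lambda>(z, j). factor_at u (r * l + 1) (r * (SOME y. factor_at u (Suc l) y = z) + j))"
  have f_pos: "f (pos x) = factor_at u (r * l + 1) x" for x
  proof -
    define y where "y = (SOME y. factor_at u (Suc l) y = factor_at u (Suc l) (x div r))"
    have "factor_at u (Suc l) y = factor_at u (Suc l) (x div r)"
      unfolding y_def by (rule someI) (rule refl)
    then have "factor_at u (r * Suc l) (r * y) = factor_at u (r * Suc l) (r * (x div r))"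
      by (rule self_similar_factor_lift[OF ss])
    then have "factor_at u (r * l + 1) (r * y + x mod r)
      = factor_at u (r * l + 1) (r * (x div r) + x mod r)"
      by (rule factor_at_eq_subfactor) (simp add: Suc_leI \<open>r > 0\<close>)
    then show ?thesis by (simp add: f_def pos_def y_def)
  qed
  have pos_in_D: "pos x \<in> D" for x
  proof -
    have "x mod r < r" using \<open>r > 0\<close> by simp
    then show ?thesis by (simp add: pos_def D_def factors_def)
  qed
  have "2 \<le> card {d \<in> D. f d = W}" if W: "W \<in> factors u (r * l + 1)" for W
  proof -
    obtain x where x: "W = factor_at u (r * l + 1) x"
      using W unfolding factors_def by blast
    obtain y where y: "factor_at u (r * l + 1) y = W" and "\<not> [y = x] (mod r)"
      using not_sync[of x] x unfolding synchronizing_def by blast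
    then have "pos x \<noteq> pos y"
      by (simp add: pos_def cong_def)
    have "card {pos x, pos y} \<le> card {d \<in> D. f d = W}"
      by (rule card_mono) (use \<open>finite D\<close> f_pos pos_in_D x y in auto)
    with \<open>pos x \<noteq> pos y\<close> show ?thesis
      by simp
  qed
  then have "2 * card (factors u (r * l + 1)) \<le> card D"
    by (rule mult_card_le_card_if_fibres[OF \<open>finite D\<close>])
  also have "card D = r * card (factors u (Suc l))"
    by (simp add: D_def card_cartesian_product)
  finally show ?thesis .
qed

lemma card_factors_le_if_not_synchronizing:
  assumes ss: "self_similar r u" and fin: "finite (range u)" and "r > 0"
    and "\<And>x. \<not> synchronizing r u (r ^ M + 1) x"
  shows "2 ^ M * card (factors u (r ^ M + 1)) \<le> r ^ M * card (factors u 2)"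
  using assms(4)
proof (induction M)
  case 0
  then show ?case by (simp add: numeral_2_eq_2)
next
  case (Suc M)
  have "r ^ M + 1 \<le> r ^ Suc M + 1"
    using \<open>r > 0\<close> by simp
  then have IH: "2 ^ M * card (factors u (r ^ M + 1)) \<le> r ^ M * card (factors u 2)"
    using Suc synchronizing_mono by blast
  have "2 * card (factors u (r * r ^ M + 1)) \<le> r * card (factors u (Suc (r ^ M)))"
    by (rule double_card_factors_le_if_not_synchronizing[OF ss fin \<open>r > 0\<close>]) (use Suc.prems in simp)
  then have "2 ^ Suc M * card (factors u (r ^ Suc M + 1)) \<le> r * (2 ^ M * card (factors u (r ^ M + 1)))"
    by (simp add: mult.left_commute)
  also have "\<dots> \<le> r ^ Suc M * card (factors u 2)"
    using IH by simp
  finally show ?case .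
qed

lemma synchronizing_factor_exists:
  assumes ss: "self_similar r u" and fin: "finite (range u)" and "r > 0"
    and "aperiodic u" and card: "card (range u) \<le> K"
  shows "\<exists>x. synchronizing r u (r ^ (2 * K) + 1) x"
proof (rule ccontr)
  define M where "M = 2 * K"
  assume "\<not> ?thesis"
  then have no_sync: "\<And>x. \<not> synchronizing r u (r ^ M + 1) x"
    unfolding M_def by blast
  have "card (factors u 2) \<le> K ^ 2"
    using card_factors_le[OF fin, of 2] card by (meson le_trans power_mono zero_le)
  also have "\<dots> \<le> (2 ^ K) ^ 2"
    by (simp add: power_mono less_imp_le)
  also have "\<dots> = 2 ^ M"
    by (simp add: M_def power_mult[symmetric] mult.commute)
  finally have card_2: "card (factors u 2) \<le> 2 ^ M" .
  have "2 ^ M * (r ^ M + 2) \<le> 2 ^ M * card (factors u (r ^ M + 1))"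
    by (rule mult_le_mono2) (use card_factors_ge_if_aperiodic[OF \<open>aperiodic u\<close> fin, of "r ^ M + 1"] in simp)
  also have "\<dots> \<le> r ^ M * card (factors u 2)"
    by (rule card_factors_le_if_not_synchronizing[OF ss fin \<open>r > 0\<close> no_sync])
  also have "\<dots> \<le> r ^ M * 2 ^ M"
    using card_2 by simp
  finally show False
    by simp
qed

definition blocks :: "(nat \<Rightarrow> 'b) \<Rightarrow> nat \<Rightarrow> nat \<Rightarrow> 'b list" where
  "blocks u b k = factor_at u b (b * k)"

lemma blocks_eq_if_letter_eq:
  assumes "self_similar r u" and "u k = u k'"
  shows "blocks u (r ^ m) k = blocks u (r ^ m) k'"
proof (induction m)
  case 0
  then show ?case using assms(2) by (simp add: blocks_def factor_at_def)
next
  case (Suc m)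
  then have "factor_at u (r * r ^ m) (r * (r ^ m * k)) = factor_at u (r * r ^ m) (r * (r ^ m * k'))"
    unfolding blocks_def by (rule self_similar_factor_lift[OF assms(1)])
  then show ?case
    by (simp add: blocks_def mult.assoc)
qed

lemma self_similar_blocks:
  assumes "self_similar r u"
  shows "self_similar r (blocks u (r ^ m))"
  unfolding self_similar_def
proof (intro allI impI)
  fix n n' j assume "j < r" and "blocks u (r ^ m) n = blocks u (r ^ m) n'"
  then have "factor_at u (r * r ^ m) (r * (r ^ m * n)) = factor_at u (r * r ^ m) (r * (r ^ m * n'))"
    using self_similar_factor_lift[OF assms] unfolding blocks_def by blast
  moreover have "r ^ m * j + r ^ m \<le> r * r ^ m"
    using \<open>j < r\<close> by (metis Suc_leI mult.commute mult_Suc_right mult_le_mono2 add.commute)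
  ultimately have "factor_at u (r ^ m) (r * (r ^ m * n) + r ^ m * j)
    = factor_at u (r ^ m) (r * (r ^ m * n') + r ^ m * j)"
    by (rule factor_at_eq_subfactor)
  then show "blocks u (r ^ m) (r * n + j) = blocks u (r ^ m) (r * n' + j)"
    by (simp add: blocks_def algebra_simps)
qed

lemma aperiodic_blocks:
  assumes "aperiodic u" and "b > 0"
  shows "aperiodic (blocks u b)"
  unfolding aperiodic_def
proof
  assume "\<exists>p>0. \<exists>N. \<forall>i\<ge>N. blocks u b (i + p) = blocks u b i"
  then obtain p N where "p > 0" and per: "\<And>i. i \<ge> N \<Longrightarrow> blocks u b (i + p) = blocks u b i"
    by blast
  have "u (i + b * p) = u i" if "i \<ge> b * N" for i
  proof -
    have "N \<le> i div b"
      using that \<open>b > 0\<close> by (simp add: less_eq_div_iff_mult_less_eq mult.commute)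
    then have "\<forall>s<b. u (b * (i div b + p) + s) = u (b * (i div b) + s)"
      using per[of "i div b"] unfolding blocks_def factor_at_eq_iff by blast
    then have "u (b * (i div b + p) + i mod b) = u (b * (i div b) + i mod b)"
      using \<open>b > 0\<close> mod_less_divisor by blast
    moreover have "b * (i div b + p) + i mod b = i + b * p"
      by (simp add: algebra_simps)
    ultimately show ?thesis
      by simp
  qed
  moreover have "b * p > 0"
    using \<open>p > 0\<close> \<open>b > 0\<close> by simp
  ultimately show False
    using \<open>aperiodic u\<close> unfolding aperiodic_def by blast
qed

lemma finite_card_range_if_determined:
  assumes determined: "\<And>k k'. u k = u k' \<Longrightarrow> v k = v k'" and "finite (range u)"
  shows "finite (range v) \<and> card (range v) \<le> card (range u)"
proof -
  define g where "g c = v (SOME k. u k = c)" for c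
  have "g (u k) = v k" for k
    unfolding g_def by (rule determined) (rule someI, rule refl)
  then have "range v = g ` range u"
    by (metis image_comp image_cong comp_apply)
  then show ?thesis
    using \<open>finite (range u)\<close> by (simp add: card_image_le)
qed

lemma factor_at_blocks_eq:
  assumes eq: "factor_at u ((c + 1) * b) (b * X + j) = factor_at u ((c + 1) * b) (b * Y + j)"
    and "j < b"
  shows "factor_at (blocks u b) c (Suc X) = factor_at (blocks u b) c (Suc Y)"
  unfolding factor_at_eq_iff blocks_def
proof (intro allI impI)
  fix s q assume "s < c" and "q < b"
  then have "b * s + q < b * c"
    using mult_le_mono2[of "Suc s" c b] by simp
  then have "b - j + b * s + q < b + b * c"
    by linarith
  then have "b - j + b * s + q < (c + 1) * b"
    by (simp add: algebra_simps)
  then have "u (b * X + j + (b - j + b * s + q)) = u (b * Y + j + (b - j + b * s + q))"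
    using eq by (simp add: factor_at_eq_iff)
  moreover have "b * X + j + (b - j + b * s + q) = b * (Suc X + s) + q"
    and "b * Y + j + (b - j + b * s + q) = b * (Suc Y + s) + q"
    using \<open>j < b\<close> by (simp_all add: algebra_simps)
  ultimately show "u (b * (Suc X + s) + q) = u (b * (Suc Y + s) + q)"
    by simp
qed

lemma uniformly_recurrent_occurs_within:
  assumes "uniformly_recurrent u"
  shows "\<exists>B. \<forall>x i. \<exists>t. t + n \<le> B \<and> factor_at u n (i + t) = factor_at u n x"
proof -
  obtain B where "\<forall>x i. \<exists>t. t + n \<le> B \<and> (\<forall>s<n. u (x + s) = u (i + t + s))"
    using assms unfolding uniformly_recurrent_def by blast
  then show ?thesis
    unfolding factor_at_eq_iff by metis
qed

lemma cong_Suc_power_if_factor_eq: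
  assumes ss: "self_similar r u" and "r > 0"
    and sync: "synchronizing r (blocks u (r ^ m)) n x\<^sub>0"
    and occurs: "\<forall>i. \<exists>t. t + n \<le> B \<and> factor_at u n (i + t) = factor_at u n x\<^sub>0"
    and eq: "factor_at u ((B + 1) * r ^ Suc m) x = factor_at u ((B + 1) * r ^ Suc m) y"
    and cong: "[x = y] (mod r ^ m)"
  shows "[x = y] (mod r ^ Suc m)"
proof -
  define v where "v = blocks u (r ^ m)"
  define X where "X = x div r ^ m"
  define Y where "Y = y div r ^ m"
  define j where "j = x mod r ^ m"
  have x: "x = r ^ m * X + j"
    by (simp add: X_def j_def)
  have y: "y = r ^ m * Y + j"
    using cong by (simp add: Y_def j_def cong_def)
  txt \<open>An occurrence of the synchronizing factor just after block \<open>X\<close> of \<open>v\<close> is carried by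
    the agreement of \<open>u\<close> at \<open>x\<close> and \<open>y\<close> to just after block \<open>Y\<close>.\<close>
  obtain t where "t + n \<le> B" and t: "factor_at u n (Suc X + t) = factor_at u n x\<^sub>0"
    using occurs by blast
  have X_occurs: "factor_at v n (Suc X + t) = factor_at v n x\<^sub>0"
    unfolding v_def by (rule factor_at_eq_transfer[OF blocks_eq_if_letter_eq[OF ss] t])
  then have X_sync: "[Suc X + t = x\<^sub>0] (mod r)"
    using sync unfolding v_def synchronizing_def by blast
  have "(t + n + 1) * r ^ m \<le> (B + 1) * r ^ Suc m"
    using \<open>t + n \<le> B\<close> \<open>r > 0\<close> by (intro mult_le_mono) simp_all
  with eq have "factor_at u ((t + n + 1) * r ^ m) (r ^ m * X + j)
    = factor_at u ((t + n + 1) * r ^ m) (r ^ m * Y + j)"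
    using factor_at_eq_subfactor[of u _ x y 0] x y by simp
  then have "factor_at v (t + n) (Suc X) = factor_at v (t + n) (Suc Y)"
    unfolding v_def by (rule factor_at_blocks_eq) (simp add: j_def \<open>r > 0\<close>)
  then have "factor_at v n (Suc X + t) = factor_at v n (Suc Y + t)"
    by (rule factor_at_eq_subfactor) simp
  with X_occurs have "factor_at v n (Suc Y + t) = factor_at v n x\<^sub>0"
    by simp
  then have Y_sync: "[Suc Y + t = x\<^sub>0] (mod r)"
    using sync unfolding v_def synchronizing_def by blast
  have "[X + Suc t = Y + Suc t] (mod r)"
    using cong_trans[OF X_sync cong_sym[OF Y_sync]] by (simp only: add_Suc_shift)
  then have "[X = Y] (mod r)"
    by (rule cong_add_rcancel_nat[THEN iffD1])
  moreover have "x mod (r ^ m * r) = r ^ m * (X mod r) + j"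
    by (simp add: mod_mult2_eq X_def j_def)
  moreover have "y mod (r ^ m * r) = r ^ m * (Y mod r) + j"
    using cong by (simp add: mod_mult2_eq Y_def j_def cong_def)
  ultimately show ?thesis
    unfolding cong_def power_Suc2 by simp
qed

lemma ex_recognizability_constant:
  assumes ss: "self_similar r u" and "r > 0" and "aperiodic u" and "uniformly_recurrent u"
    and fin: "finite (range u)"
  shows "\<exists>L. \<forall>m x y. factor_at u (L * r ^ m) x = factor_at u (L * r ^ m) y \<longrightarrow> [x = y] (mod r ^ m)"
proof -
  txt \<open>This length serves every block word, as none has more than \<^term>\<open>card (range u)\<close> letters.\<close>
  define n where "n = r ^ (2 * card (range u)) + 1"
  obtain B where occurs: "\<forall>x i. \<exists>t. t + n \<le> B \<and> factor_at u n (i + t) = factor_at u n x"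
    using uniformly_recurrent_occurs_within[OF \<open>uniformly_recurrent u\<close>] by blast
  have sync: "\<exists>x\<^sub>0. synchronizing r (blocks u (r ^ m)) n x\<^sub>0" for m
  proof -
    have range: "finite (range (blocks u (r ^ m))) \<and> card (range (blocks u (r ^ m))) \<le> card (range u)"
      by (rule finite_card_range_if_determined[OF blocks_eq_if_letter_eq[OF ss] fin])
    have "aperiodic (blocks u (r ^ m))"
      using \<open>r > 0\<close> by (intro aperiodic_blocks[OF \<open>aperiodic u\<close>]) simp
    from synchronizing_factor_exists[OF self_similar_blocks[OF ss] conjunct1[OF range] \<open>r > 0\<close> this conjunct2[OF range]]
    show ?thesis
      unfolding n_def .
  qed
  have "[x = y] (mod r ^ m)"
    if "factor_at u ((B + 1) * r ^ m) x = factor_at u ((B + 1) * r ^ m) y" for m x y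
    using that
  proof (induction m arbitrary: x y)
    case 0
    then show ?case by (simp add: cong_def)
  next
    case (Suc m)
    have "(B + 1) * r ^ m \<le> (B + 1) * r ^ Suc m"
      using \<open>r > 0\<close> by (intro mult_le_mono2 power_increasing) simp_all
    then have "factor_at u ((B + 1) * r ^ m) (x + 0) = factor_at u ((B + 1) * r ^ m) (y + 0)"
      by (intro factor_at_eq_subfactor[OF Suc.prems]) simp
    then have "[x = y] (mod r ^ m)"
      by (intro Suc.IH) simp
    obtain x\<^sub>0 where "synchronizing r (blocks u (r ^ m)) n x\<^sub>0"
      using sync by blast
    moreover have "\<forall>i. \<exists>t. t + n \<le> B \<and> factor_at u n (i + t) = factor_at u n x\<^sub>0"
      using occurs by blast
    ultimately show ?case
      by (rule cong_Suc_power_if_factor_eq[OF ss \<open>r > 0\<close> _ _ Suc.prems \<open>[x = y] (mod r ^ m)\<close>])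
  qed
  then show ?thesis by blast
qed

lemma antipower_at_if_recognizable:
  assumes rec: "\<And>x y. factor_at w (L * N) x = factor_at w (L * N) y \<Longrightarrow> [x = y] (mod N)"
    and "k \<le> N"
  shows "antipower_at w i k (L * N + 1)"
proof -
  define l where "l = L * N + 1"
  have "[l = 0 + 1] (mod N)"
    unfolding l_def by (intro cong_add) (simp_all add: cong_def)
  then have l_cancel: "[p * l = p] (mod N)" for p
    using cong_scalar_left[of l 1 N p] by simp
  have "factor_at w l (i + p * l) \<noteq> factor_at w l (i + q * l)"
    if "p < k" and "q < k" and "p \<noteq> q" for p q
  proof
    assume "factor_at w l (i + p * l) = factor_at w l (i + q * l)"
    then have "factor_at w (L * N) (i + p * l + 0) = factor_at w (L * N) (i + q * l + 0)"
      by (rule factor_at_eq_subfactor) (simp add: l_def)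
    then have "[i + p * l = i + q * l] (mod N)"
      by (intro rec) simp
    then have "[p * l = q * l] (mod N)"
      by (rule cong_add_lcancel_nat[THEN iffD1])
    then have "[p = q] (mod N)"
      using l_cancel by (meson cong_sym cong_trans)
    then show False
      using cong_less_modulus_unique_nat[of p q N] that \<open>k \<le> N\<close> by simp
  qed
  then show ?thesis
    unfolding antipower_at_def factor_at_def[symmetric] l_def[symmetric] by blast
qed

lemma length_morph_apply:
  "uniform_morphism r \<mu> \<Longrightarrow> length (morph_apply \<mu> xs) = r * length xs"
  by (induction xs) (simp_all add: morph_apply_def uniform_morphism_def)

lemma length_morph_apply_power:
  "uniform_morphism r \<mu> \<Longrightarrow> length ((morph_apply \<mu> ^^ n) xs) = r ^ n * length xs"
  by (induction n) (simp_all add: length_morph_apply)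

lemma nth_morph_apply:
  assumes "uniform_morphism r \<mu>" and "k < length xs" and "j < r"
  shows "morph_apply \<mu> xs ! (r * k + j) = \<mu> (xs ! k) ! j"
  using assms(2)
proof (induction xs arbitrary: k)
  case Nil
  then show ?case by simp
next
  case (Cons x xs)
  have "length (\<mu> x) = r"
    using assms(1) by (simp add: uniform_morphism_def)
  moreover have "morph_apply \<mu> (x # xs) = \<mu> x @ morph_apply \<mu> xs"
    by (simp add: morph_apply_def)
  ultimately show ?case
    using Cons \<open>j < r\<close> by (cases k) (simp_all add: nth_append)
qed

lemma fixed_point_word_nth:
  assumes "r \<ge> 2" and uniform: "uniform_morphism r \<mu>" and fp: "is_fixed_point_word \<mu> a w"
    and "j < r"
  shows "w (r * k + j) = \<mu> (w k) ! j"
proof -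
  define xs where "xs = (morph_apply \<mu> ^^ k) [a]"
  have "k < 2 ^ k" by simp
  also have "\<dots> \<le> r ^ k" using \<open>r \<ge> 2\<close> by (simp add: power_mono)
  finally have k: "k < length xs"
    by (simp add: xs_def length_morph_apply_power[OF uniform])
  then have "r * k + j < length (morph_apply \<mu> xs)"
    using \<open>j < r\<close> length_morph_apply[OF uniform, of xs] mult_le_mono2[of "Suc k" "length xs" r] by simp
  then have "w (r * k + j) = morph_apply \<mu> xs ! (r * k + j)"
    using fp unfolding is_fixed_point_word_def xs_def by (metis funpow.simps(2) o_apply)
  also have "\<dots> = \<mu> (xs ! k) ! j"
    by (rule nth_morph_apply[OF uniform k \<open>j < r\<close>])
  also have "xs ! k = w k"
    using fp k unfolding is_fixed_point_word_def xs_def by simp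
  finally show ?thesis .
qed

lemma self_similar_fixed_point_word:
  assumes "r \<ge> 2" and "uniform_morphism r \<mu>" and "is_fixed_point_word \<mu> a w"
  shows "self_similar r w"
  unfolding self_similar_def using fixed_point_word_nth[OF assms] by simp

lemma ex_power_between:
  fixes r k :: nat
  assumes "r \<ge> 2" and "k \<ge> 1"
  shows "\<exists>m. k \<le> r ^ m \<and> r ^ m \<le> r * k"
proof -
  obtain n where "r ^ n \<le> k" and "k < r ^ (n + 1)"
    using ex_power_ivl1[OF assms] by blast
  then have "k \<le> r ^ (n + 1) \<and> r ^ (n + 1) \<le> r * k"
    by simp
  then show ?thesis ..
qed

theorem theorem5:
  fixes \<mu> :: "'a::finite \<Rightarrow> 'a list" and a :: 'a and w :: "nat \<Rightarrow> 'a" and r :: nat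
  assumes "r \<ge> 2" and "uniform_morphism r \<mu>" and "prolongable_on \<mu> a"
    and "is_fixed_point_word \<mu> a w"
    and "aperiodic w" and "uniformly_recurrent w"
  shows "\<exists>c::nat. \<forall>k::nat. \<forall>i::nat. k > 0 \<longrightarrow>
           (\<exists>l. 0 < l \<and> l \<le> c * k \<and> antipower_at w i k l)"
proof -
  have "r > 0"
    using assms(1) by simp
  have "self_similar r w"
    by (rule self_similar_fixed_point_word[OF assms(1,2,4)])
  then obtain L where L: "\<And>m x y. factor_at w (L * r ^ m) x = factor_at w (L * r ^ m) y
      \<Longrightarrow> [x = y] (mod r ^ m)"
    using ex_recognizability_constant[OF _ \<open>r > 0\<close> assms(5,6) finite] by blast
  show ?thesis
  proof (rule exI[of _ "L * r + 1"], intro allI impI)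
    fix k i :: nat
    assume "k > 0"
    then obtain m where "k \<le> r ^ m" and "r ^ m \<le> r * k"
      using ex_power_between[OF assms(1), of k] by auto
    have "L * r ^ m + 1 \<le> L * (r * k) + k"
      using mult_le_mono2[OF \<open>r ^ m \<le> r * k\<close>, of L] \<open>k > 0\<close> by linarith
    then have "L * r ^ m + 1 \<le> (L * r + 1) * k"
      by (simp add: algebra_simps)
    moreover have "antipower_at w i k (L * r ^ m + 1)"
      by (rule antipower_at_if_recognizable[OF L \<open>k \<le> r ^ m\<close>])
    ultimately show "\<exists>l. 0 < l \<and> l \<le> (L * r + 1) * k \<and> antipower_at w i k l"
      by (intro exI[of _ "L * r ^ m + 1"]) simp
  qed
qed

end
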